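(* Let $r$ be an odd positive integer and $n=2^{\alpha}p_1^{\alpha_1}p_2^{\alpha_2}\cdots p_s^{\alpha_s}$, where $p_1,\ldots,p_s$ are distinct odd primes each greater than $r$, $\alpha,\alpha_1,\ldots,\alpha_s$ are positive integers, and $2^t p_1^{\gamma}+r$ is composite for all $t\in\{1,\ldots,\alpha\}$ and $\gamma\in\{1,\ldots,\alpha_1\}$. For each such $t,\gamma$ let $q_{t,\gamma}$ be a prime divisor of $2^tp_1^{\gamma}+r$, and let $M$ be the least common multiple of all the $q_{t,\gamma}$. If $p_i\equiv 1\pmod{M}$ for all $i\in\{2,\ldots,s\}$ and $p_1-r\nmid n$, then $n\in G_r$.
   Context: For a positive integer $r$, the $r$-th Schemmel totient function $S_r:\mathbb{N}\to\mathbb{N}_0$ is the multiplicative arithmetic function (so $S_r(1)=1$ and $S_r(ab)=S_r(a)S_r(b)$ for coprime $a,b$) defined on prime powers by $S_r(p^{\alpha})=0$ if $p\le r$ and $S_r(p^\alpha)=p^{\alpha-1}(p-r)$ if $p>r$, for all primes $p$ and positive integers $\alpha$. $G_r$ denotes the set of positive integers not in the range of $S_r$. *)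

theory Defs
  imports "HOL-Computational_Algebra.Primes" "HOL-Number_Theory.Cong"
begin

text \<open>Its domain is the positive integers; the value at 0 is irrelevant (set to 0).\<close>
definition schemmel_totient :: "nat \<Rightarrow> nat \<Rightarrow> nat" where
  "schemmel_totient r n =
     (if n = 0 then 0
      else (\<Prod>p\<in>prime_factors n.
              if p \<le> r then 0 else p ^ (multiplicity p n - 1) * (p - r)))"

definition G :: "nat \<Rightarrow> nat set" where
  "G r = {n. 0 < n \<and> (\<forall>m. 0 < m \<longrightarrow> schemmel_totient r m \<noteq> n)}"

end

theory Submission
  imports Defs
begin

text \<open>Suppose \<open>S\<^sub>r(m) = n\<close>. Since \<open>p\<^sub>1\<close> divides \<open>n\<close>, it divides a factor
  \<open>f\<^sup>k (f - r)\<close> of \<open>S\<^sub>r(m)\<close> for some prime \<open>f > r\<close> dividing \<open>m\<close>; as \<open>f - r\<close>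
  divides \<open>n\<close> but \<open>p\<^sub>1 - r\<close> does not, \<open>f \<noteq> p\<^sub>1\<close> and so \<open>p\<^sub>1\<close> divides \<open>f - r\<close>.
  Then \<open>f \<noteq> 2\<close>, so \<open>f - r\<close> is even and \<open>f - r = 2\<^sup>t p\<^sub>1\<^sup>\<gamma> Q\<close> with \<open>1 \<le> t \<le> \<alpha>\<close>, \<open>1 \<le> \<gamma> \<le> \<alpha>\<^sub>1\<close>
  and \<open>Q\<close> a product of the primes \<open>p\<^sub>2, \<dots>, p\<^sub>s\<close>. These are \<open>1\<close> modulo
  \<open>q = q(t, \<gamma>)\<close>, so \<open>f \<equiv> 2\<^sup>t p\<^sub>1\<^sup>\<gamma> + r \<equiv> 0 (mod q)\<close> and hence \<open>f = q\<close>. But \<open>q\<close> is a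
  proper divisor of the composite number \<open>2\<^sup>t p\<^sub>1\<^sup>\<gamma> + r \<le> f\<close>.\<close>

lemma schemmel_totient_nonzero_imp_pos: "schemmel_totient r m \<noteq> 0 \<Longrightarrow> 0 < m"
  by (cases "m = 0") (simp_all add: schemmel_totient_def)

lemma schemmel_totient_eq_prod:
  "0 < m \<Longrightarrow> schemmel_totient r m =
     (\<Prod>p\<in>prime_factors m. if p \<le> r then 0 else p ^ (multiplicity p m - 1) * (p - r))"
  by (simp add: schemmel_totient_def)

lemma prime_factor_gt_if_schemmel_totient_nonzero:
  assumes "schemmel_totient r m \<noteq> 0" "f \<in> prime_factors m"
  shows "r < f"
proof (rule ccontr)
  assume "\<not> r < f"
  then have "schemmel_totient r m = 0"
    unfolding schemmel_totient_def using assms(2) by (auto intro!: bexI[of _ f])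
  with assms(1) show False by simp
qed

lemma schemmel_totient_factor_dvd:
  assumes "schemmel_totient r m \<noteq> 0" "f \<in> prime_factors m"
  shows "f ^ (multiplicity f m - 1) * (f - r) dvd schemmel_totient r m"
proof -
  have "\<not> f \<le> r" using prime_factor_gt_if_schemmel_totient_nonzero[OF assms] by simp
  then show ?thesis
    using dvd_prodI[OF finite_set_mset assms(2),
        of "\<lambda>p. if p \<le> r then 0 else p ^ (multiplicity p m - 1) * (p - r)"]
    by (simp only: schemmel_totient_eq_prod[OF schemmel_totient_nonzero_imp_pos[OF assms(1)]]
        if_False)
qed

lemma prime_dvd_schemmel_totient:
  assumes "prime p" "p dvd schemmel_totient r m" "schemmel_totient r m \<noteq> 0"
    and "\<not> (p - r) dvd schemmel_totient r m"
  obtains f where "prime f" "r < f" "p dvd f - r" "f - r dvd schemmel_totient r m"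
proof -
  have "\<exists>f\<in>prime_factors m.
      p dvd (if f \<le> r then 0 else f ^ (multiplicity f m - 1) * (f - r))"
    using assms(2)
    by (simp only: schemmel_totient_eq_prod[OF schemmel_totient_nonzero_imp_pos[OF assms(3)]]
        prime_dvd_prod_iff[OF finite_set_mset assms(1)])
  then obtain f where f: "f \<in> prime_factors m"
    and "p dvd (if f \<le> r then 0 else f ^ (multiplicity f m - 1) * (f - r))" ..
  moreover have "r < f" by (rule prime_factor_gt_if_schemmel_totient_nonzero[OF assms(3) f])
  ultimately have "p dvd f ^ (multiplicity f m - 1) \<or> p dvd f - r"
    using prime_dvd_mult_iff[OF assms(1)] by simp
  moreover have "f - r dvd schemmel_totient r m"
    using dvd_mult_right[OF schemmel_totient_factor_dvd[OF assms(3) f]] .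
  moreover have "p = f" if "p dvd f ^ (multiplicity f m - 1)"
    using primes_dvd_imp_eq[OF assms(1) in_prime_factors_imp_prime[OF f]]
      prime_dvd_power[OF assms(1) that] .
  ultimately have "p dvd f - r" using assms(4) by auto
  show ?thesis
    by (rule that[OF in_prime_factors_imp_prime[OF f] \<open>r < f\<close> \<open>p dvd f - r\<close>
          \<open>f - r dvd schemmel_totient r m\<close>])
qed

lemma cong_1_if_prime_factors_cong_1:
  fixes Q q :: nat
  assumes "Q > 0" "\<And>g. g \<in> prime_factors Q \<Longrightarrow> [g = 1] (mod q)"
  shows "[Q = 1] (mod q)"
proof -
  have "Q = (\<Prod>g\<in>prime_factors Q. g ^ multiplicity g Q)"
    using prod_prime_factors[of Q] assms(1) by simp
  also have "[\<dots> = (\<Prod>g\<in>prime_factors Q. 1 ^ multiplicity g Q)] (mod q)"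
    by (intro cong_prod cong_pow assms(2))
  finally show ?thesis by simp
qed

lemma prime_power_dvd_times_coprime_imp_le:
  fixes p t k X :: nat
  assumes "prime p" "p ^ t dvd p ^ k * X" "\<not> p dvd X"
  shows "t \<le> k"
proof -
  have "coprime (p ^ t) X"
    using assms(1,3) by (simp add: coprime_power_left_iff prime_imp_coprime)
  then have "p ^ t dvd p ^ k" using assms(2) coprime_dvd_mult_left_iff by blast
  then show ?thesis using power_dvd_imp_le prime_gt_1_nat assms(1) by blast
qed

lemma divisor_of_two_prime_powers_times_decompose:
  fixes p D R :: nat
  assumes p: "prime p" "odd p" and R: "odd R" "\<not> p dvd R"
    and D: "D \<noteq> 0" "D dvd 2 ^ \<alpha> * p ^ a * R"
  obtains t \<gamma> Q where "D = 2 ^ t * p ^ \<gamma> * Q" "t \<le> \<alpha>" "\<gamma> \<le> a"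
    "Q dvd R" "odd Q" "\<not> p dvd Q"
proof -
  obtain P where P: "D = 2 ^ multiplicity 2 D * P" "odd P"
    using multiplicity_decompose'[OF D(1), of 2] by auto
  have "P \<noteq> 0" using P D(1) by (metis mult_0_right)
  then obtain Q where Q: "P = p ^ multiplicity p P * Q" "\<not> p dvd Q"
    using multiplicity_decompose'[of P p] p(1) not_prime_unit by blast
  define t \<gamma> where "t = multiplicity 2 D" and "\<gamma> = multiplicity p P"
  have D_eq: "D = 2 ^ t * p ^ \<gamma> * Q" using P Q by (simp add: t_def \<gamma>_def mult.assoc)
  have "odd Q" using P(2) Q(1) by (metis dvd_mult)
  have "p \<noteq> 2" using p(2) by auto
  then have "\<not> p dvd 2 ^ \<alpha>"
    using p(1) prime_dvd_power two_is_prime_nat primes_dvd_imp_eq by blast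
  have "2 ^ t dvd 2 ^ \<alpha> * (p ^ a * R)"
    using D_eq D(2) by (metis dvd_mult2 dvd_trans dvd_triv_left mult.assoc)
  moreover have "\<not> 2 dvd p ^ a * R" using p(2) R(1) by simp
  ultimately have "t \<le> \<alpha>" by (intro prime_power_dvd_times_coprime_imp_le) auto
  have "p ^ \<gamma> dvd p ^ a * (2 ^ \<alpha> * R)"
    using D_eq D(2)
    by (metis dvd_mult dvd_mult2 dvd_trans dvd_triv_left mult.assoc mult.commute)
  moreover have "\<not> p dvd 2 ^ \<alpha> * R"
    using \<open>\<not> p dvd 2 ^ \<alpha>\<close> R(2) p(1) prime_dvd_mult_iff by blast
  ultimately have "\<gamma> \<le> a" using p(1) by (intro prime_power_dvd_times_coprime_imp_le)
  have "coprime Q (2 ^ \<alpha> * p ^ a)"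
    using \<open>odd Q\<close> Q(2) p(1)
    by (simp add: coprime_commute[of Q] prime_imp_coprime coprime_power_left_iff)
  moreover have "Q dvd 2 ^ \<alpha> * p ^ a * R" using D_eq D(2) dvd_trans by fastforce
  ultimately have "Q dvd R" using coprime_dvd_mult_right_iff by blast
  show ?thesis using that D_eq \<open>t \<le> \<alpha>\<close> \<open>\<gamma> \<le> a\<close> \<open>Q dvd R\<close> \<open>odd Q\<close> Q(2) by blast
qed

lemma prime_cong_divisor_of_composite_less:
  fixes f q N :: nat
  assumes "prime f" "prime q" "q dvd N" "1 < N" "\<not> prime N" "[f = N] (mod q)"
  shows "f < N"
proof -
  have "q dvd f" using assms(3,6) cong_dvd_iff by blast
  then have "q = f" using assms(1,2) primes_dvd_imp_eq by blast
  moreover have "q \<le> N" using assms(3,4) dvd_imp_le by simp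
  moreover have "q \<noteq> N" using assms(2,5) by auto
  ultimately show ?thesis by simp
qed

lemma prime_dvd_prod_prime_powers:
  fixes g :: nat and p a :: "'i \<Rightarrow> nat"
  assumes "finite I" "\<forall>i\<in>I. prime (p i)" "prime g" "g dvd (\<Prod>i\<in>I. p i ^ a i)"
  obtains i where "i \<in> I" "g = p i"
proof -
  have "\<exists>i\<in>I. g dvd p i ^ a i"
    using assms(4) by (simp only: prime_dvd_prod_iff[OF assms(1,3)])
  then obtain i where i: "i \<in> I" "g dvd p i ^ a i" ..
  then have "g = p i"
    using primes_dvd_imp_eq[OF assms(3)] assms(2) i(1) prime_dvd_power[OF assms(3) i(2)]
    by simp
  with i(1) that show ?thesis by blast
qed

lemma prime_not_dvd_prod_other_prime_powers:
  fixes p a :: "'i \<Rightarrow> nat"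
  assumes "finite I" "\<forall>i\<in>I. prime (p i)" "inj_on p I" "j \<in> I"
  shows "\<not> p j dvd (\<Prod>i\<in>I - {j}. p i ^ a i)"
proof
  assume dvd: "p j dvd (\<Prod>i\<in>I - {j}. p i ^ a i)"
  have "finite (I - {j})" "\<forall>i\<in>I - {j}. prime (p i)" "prime (p j)" using assms by auto
  then obtain i where i: "i \<in> I - {j}" "p j = p i"
    using dvd by (rule prime_dvd_prod_prime_powers)
  have "j = i" by (rule inj_onD[OF assms(3) i(2) assms(4)]) (use i(1) in simp)
  with i(1) show False by simp
qed

lemma schemmel_totient_prime_factor_shape:
  fixes r p \<alpha> a R m :: nat
  assumes r: "0 < r" "odd r" and p: "prime p" "odd p" and R: "odd R" "\<not> p dvd R"
    and S: "schemmel_totient r m = 2 ^ \<alpha> * p ^ a * R" "0 < a"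
    and not_dvd: "\<not> (p - r) dvd 2 ^ \<alpha> * p ^ a * R"
  obtains f t \<gamma> Q where "prime f" "f = 2 ^ t * p ^ \<gamma> * Q + r"
    "t \<in> {1..\<alpha>}" "\<gamma> \<in> {1..a}" "Q dvd R"
proof -
  have "2 ^ \<alpha> * p ^ a * R \<noteq> 0" using R p by (simp add: prime_gt_0_nat odd_pos)
  moreover have "p dvd 2 ^ \<alpha> * p ^ a * R" using S(2) by simp
  ultimately obtain f where f: "prime f" "r < f" "p dvd f - r" "f - r dvd 2 ^ \<alpha> * p ^ a * R"
    using prime_dvd_schemmel_totient[OF p(1), of r m, unfolded S(1)] not_dvd by blast
  have "f \<noteq> 2"
  proof
    assume "f = 2"
    then have "f - r = 1" using f(2) r(1) by simp
    with f(3) p(1) show False by simp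
  qed
  then have "2 < f" using prime_ge_2_nat[OF f(1)] by simp
  then have "odd f" using f(1) prime_odd_nat by simp
  then have "even (f - r)" using r(2) f(2) by simp
  have "f - r \<noteq> 0" using f(2) by simp
  then obtain t \<gamma> Q where D: "f - r = 2 ^ t * p ^ \<gamma> * Q" "t \<le> \<alpha>" "\<gamma> \<le> a"
      "Q dvd R" "odd Q" "\<not> p dvd Q"
    using f(4) by (rule divisor_of_two_prime_powers_times_decompose[OF p R])
  have "t \<noteq> 0"
  proof
    assume "t = 0"
    with D(1,5) p(2) have "odd (f - r)" by simp
    with \<open>even (f - r)\<close> show False by simp
  qed
  moreover have "\<gamma> \<noteq> 0"
  proof
    assume "\<gamma> = 0"
    have "p \<noteq> 2" using p(2) by auto
    then have "\<not> p dvd 2 ^ t"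
      using p(1) prime_dvd_power two_is_prime_nat primes_dvd_imp_eq by blast
    with f(3) D(1,6) \<open>\<gamma> = 0\<close> show False by (simp add: prime_dvd_mult_iff[OF p(1)])
  qed
  moreover have "f = 2 ^ t * p ^ \<gamma> * Q + r" using D(1) f(2) by simp
  ultimately show ?thesis using that f(1) D(2-4) by simp
qed

lemma not_schemmel_totient_value:
  fixes r p \<alpha> a R m :: nat and q :: "nat \<Rightarrow> nat \<Rightarrow> nat"
  assumes r: "0 < r" "odd r" and p: "prime p" "odd p" and R: "odd R" "\<not> p dvd R" "0 < a"
    and composite: "\<forall>t\<in>{1..\<alpha>}. \<forall>\<gamma>\<in>{1..a}.
                      1 < 2 ^ t * p ^ \<gamma> + r \<and> \<not> prime (2 ^ t * p ^ \<gamma> + r)"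
    and q_prime: "\<forall>t\<in>{1..\<alpha>}. \<forall>\<gamma>\<in>{1..a}. prime (q t \<gamma>)"
    and q_dvd: "\<forall>t\<in>{1..\<alpha>}. \<forall>\<gamma>\<in>{1..a}. q t \<gamma> dvd 2 ^ t * p ^ \<gamma> + r"
    and R_cong: "\<forall>t\<in>{1..\<alpha>}. \<forall>\<gamma>\<in>{1..a}. \<forall>g\<in>prime_factors R. [g = 1] (mod q t \<gamma>)"
    and not_dvd: "\<not> (p - r) dvd 2 ^ \<alpha> * p ^ a * R"
  shows "schemmel_totient r m \<noteq> 2 ^ \<alpha> * p ^ a * R"
proof
  assume S: "schemmel_totient r m = 2 ^ \<alpha> * p ^ a * R"
  obtain f t \<gamma> Q where f: "prime f" "f = 2 ^ t * p ^ \<gamma> * Q + r"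
      and t\<gamma>: "t \<in> {1..\<alpha>}" "\<gamma> \<in> {1..a}" and "Q dvd R"
    by (rule schemmel_totient_prime_factor_shape[OF r p R(1,2) S R(3) not_dvd])
  have "R \<noteq> 0" using R(1) by (auto dest: odd_pos)
  then have "Q \<noteq> 0" using \<open>Q dvd R\<close> by auto
  have "[Q = 1] (mod q t \<gamma>)"
  proof (rule cong_1_if_prime_factors_cong_1)
    fix g assume "g \<in> prime_factors Q"
    then have "g \<in> prime_factors R"
      using \<open>Q dvd R\<close> \<open>R \<noteq> 0\<close> dvd_trans by (auto simp only: in_prime_factors_iff)
    then show "[g = 1] (mod q t \<gamma>)" using R_cong t\<gamma> by blast
  qed (use \<open>Q \<noteq> 0\<close> in simp)
  then have "[2 ^ t * p ^ \<gamma> * Q + r = 2 ^ t * p ^ \<gamma> * 1 + r] (mod q t \<gamma>)"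
    by (intro cong_add cong_mult cong_refl)
  then have "[f = 2 ^ t * p ^ \<gamma> + r] (mod q t \<gamma>)" using f(2) by simp
  then have "f < 2 ^ t * p ^ \<gamma> + r"
    using composite q_prime q_dvd t\<gamma>
    by (intro prime_cong_divisor_of_composite_less[OF f(1), of "q t \<gamma>"]) auto
  moreover have "2 ^ t * p ^ \<gamma> + r \<le> f" using f(2) \<open>Q \<noteq> 0\<close> by simp
  ultimately show False by simp
qed

theorem theorem3p2:
  fixes r s \<alpha> n :: nat and p a :: "nat \<Rightarrow> nat" and q :: "nat \<Rightarrow> nat \<Rightarrow> nat"
  assumes r_pos: "0 < r" and r_odd: "odd r"
    and s_pos: "1 \<le> s"
    and p_prime: "\<forall>i\<in>{1..s}. prime (p i)"
    and p_odd: "\<forall>i\<in>{1..s}. odd (p i)"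
    and p_gt: "\<forall>i\<in>{1..s}. r < p i"
    and p_inj: "inj_on p {1..s}"
    and alpha_pos: "0 < \<alpha>"
    and a_pos: "\<forall>i\<in>{1..s}. 0 < a i"
    and n_def: "n = 2 ^ \<alpha> * (\<Prod>i\<in>{1..s}. p i ^ a i)"
    and composite: "\<forall>t\<in>{1..\<alpha>}. \<forall>\<gamma>\<in>{1..a 1}.
                      1 < 2 ^ t * p 1 ^ \<gamma> + r \<and> \<not> prime (2 ^ t * p 1 ^ \<gamma> + r)"
    and q_prime: "\<forall>t\<in>{1..\<alpha>}. \<forall>\<gamma>\<in>{1..a 1}. prime (q t \<gamma>)"
    and q_dvd: "\<forall>t\<in>{1..\<alpha>}. \<forall>\<gamma>\<in>{1..a 1}. q t \<gamma> dvd 2 ^ t * p 1 ^ \<gamma> + r"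
    and cong_M: "\<forall>i\<in>{2..s}.
        [p i = 1] (mod (Lcm {q t \<gamma> | t \<gamma>. t \<in> {1..\<alpha>} \<and> \<gamma> \<in> {1..a 1}}))"
    and not_dvd: "\<not> (p 1 - r) dvd n"
  shows "n \<in> G r"
proof -
  define R where "R = (\<Prod>i\<in>{2..s}. p i ^ a i)"
  have "{1..s} - {1} = {2..s}" "1 \<in> {1..s}" using s_pos by auto
  then have n_eq: "n = 2 ^ \<alpha> * p 1 ^ a 1 * R"
    unfolding n_def R_def
    using prod.remove[OF finite_atLeastAtMost \<open>1 \<in> {1..s}\<close>, of "\<lambda>i. p i ^ a i"]
    by (simp add: mult.assoc)
  have p1: "prime (p 1)" "odd (p 1)" "0 < a 1" using p_prime p_odd a_pos s_pos by auto
  have "odd R" unfolding R_def using p_odd by (simp add: even_prod_iff)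
  have "\<not> p 1 dvd R"
    using prime_not_dvd_prod_other_prime_powers[OF _ p_prime p_inj \<open>1 \<in> {1..s}\<close>]
      \<open>{1..s} - {1} = {2..s}\<close> by (simp add: R_def)
  have R_cong: "\<forall>t\<in>{1..\<alpha>}. \<forall>\<gamma>\<in>{1..a 1}. \<forall>g\<in>prime_factors R. [g = 1] (mod q t \<gamma>)"
  proof (intro ballI)
    fix t \<gamma> g assume t\<gamma>: "t \<in> {1..\<alpha>}" "\<gamma> \<in> {1..a 1}" and "g \<in> prime_factors R"
    then have "prime g" "g dvd (\<Prod>i\<in>{2..s}. p i ^ a i)" by (auto simp: R_def)
    moreover have "\<forall>i\<in>{2..s}. prime (p i)" using p_prime by simp
    ultimately obtain i where "i \<in> {2..s}" "g = p i"
      using prime_dvd_prod_prime_powers[OF finite_atLeastAtMost] by metis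
    moreover have "q t \<gamma> dvd Lcm {q t \<gamma> | t \<gamma>. t \<in> {1..\<alpha>} \<and> \<gamma> \<in> {1..a 1}}"
      using t\<gamma> by (intro dvd_Lcm) auto
    ultimately show "[g = 1] (mod q t \<gamma>)" using cong_M cong_dvd_modulus_nat by blast
  qed
  have "0 < n" using n_eq \<open>odd R\<close> p1 by (simp add: prime_gt_0_nat odd_pos)
  with not_schemmel_totient_value[OF r_pos r_odd p1(1,2) \<open>odd R\<close> \<open>\<not> p 1 dvd R\<close> p1(3)
      composite q_prime q_dvd R_cong not_dvd[unfolded n_eq]]
  show ?thesis by (simp add: G_def n_eq)
qed

end
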